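(* Let $1<p<\infty$, $s\in(0,1)$, $sp<N$, $\mu>0$, and let $E\subset\mathbb{R}^N$ be a (possibly unbounded) domain. Let $u\in D^{s,p}_0(E)$ be a sign-changing weak solution of $(-\Delta)^s_pu=\mu|u|^{p^*_s-2}u$ in $E$, $u=0$ in $\mathbb{R}^N\setminus E$ (i.e. both $\max\{u,0\}$ and $\max\{-u,0\}$ are not a.e. zero). Then $$\|u\|^{p^*_s}_{L^{p^*_s}(E)}\ge2\Big(\frac{\mathcal{S}_{p,s}}{\mu}\Big)^{\frac{N}{sp}},\quad [u]^p_{D^{s,p}(\mathbb{R}^N)}\ge2\mu\Big(\frac{\mathcal{S}_{p,s}}{\mu}\Big)^{\frac{N}{sp}},\quad I_\infty(u)\ge2\mu\frac sN\Big(\frac{\mathcal{S}_{p,s}}{\mu}\Big)^{\frac{N}{sp}}.$$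
   Context: $p^*_s=Np/(N-sp)$; $J_p(t)=|t|^{p-2}t$; $[u]_{D^{s,p}(\mathbb{R}^N)}=\big(\int_{\mathbb{R}^{2N}}\frac{|u(x)-u(y)|^p}{|x-y|^{N+sp}}dxdy\big)^{1/p}$; $D^{s,p}_0(\mathbb{R}^N)=\{u\in L^{p^*_s}:[u]<\infty\}$; $D^{s,p}_0(E)=\{u\in D^{s,p}_0(\mathbb{R}^N):u=0\text{ a.e. outside }E\}$. Weak solution: $\int_{\mathbb{R}^{2N}}\frac{J_p(u(x)-u(y))(\varphi(x)-\varphi(y))}{|x-y|^{N+sp}}=\mu\int|u|^{p^*_s-2}u\varphi$ for all $\varphi\in D^{s,p}_0(E)$. $\mathcal{S}_{p,s}=\inf\{[u]^p_{D^{s,p}(\mathbb{R}^N)}:u\in D^{s,p}_0(\mathbb{R}^N),\ \|u\|_{L^{p^*_s}(\mathbb{R}^N)}=1\}$ (sharp Sobolev constant). $I_\infty(u)=\frac1p[u]^p_{D^{s,p}(\mathbb{R}^N)}-\frac{\mu}{p^*_s}\int_{\mathbb{R}^N}|u|^{p^*_s}dx$. *)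

theory Defs
  imports "HOL-Analysis.Analysis"
begin

text \<open>The ambient space R^N is an arbitrary Euclidean space 'a with N = DIM('a).\<close>

definition crit_exp :: "nat \<Rightarrow> real \<Rightarrow> real \<Rightarrow> real" where
  "crit_exp N p s = real N * p / (real N - s * p)"

definition Jp :: "real \<Rightarrow> real \<Rightarrow> real" where
  "Jp p t = \<bar>t\<bar> powr (p - 2) * t"

definition gagliardo_p :: "real \<Rightarrow> real \<Rightarrow> ('a::euclidean_space \<Rightarrow> real) \<Rightarrow> ennreal" where
  "gagliardo_p p s u =
     (\<integral>\<^sup>+ z. ennreal (\<bar>u (fst z) - u (snd z)\<bar> powr p /
                 norm (fst z - snd z) powr (real DIM('a) + s * p)) \<partial>(lborel \<Otimes>\<^sub>M lborel))"

definition Dsp0 :: "real \<Rightarrow> real \<Rightarrow> ('a::euclidean_space \<Rightarrow> real) set" where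
  "Dsp0 p s = {u. u \<in> borel_measurable lborel
      \<and> (\<integral>\<^sup>+ x. ennreal (\<bar>u x\<bar> powr crit_exp DIM('a) p s) \<partial>lborel) < \<infinity>
      \<and> gagliardo_p p s u < \<infinity>}"

definition Dsp0_on :: "real \<Rightarrow> real \<Rightarrow> 'a::euclidean_space set \<Rightarrow> ('a \<Rightarrow> real) set" where
  "Dsp0_on p s E = {u \<in> Dsp0 p s. AE x in lborel. x \<notin> E \<longrightarrow> u x = 0}"

definition weak_solution :: "real \<Rightarrow> real \<Rightarrow> real \<Rightarrow> 'a::euclidean_space set \<Rightarrow> ('a \<Rightarrow> real) \<Rightarrow> bool" where
  "weak_solution p s \<mu> E u \<longleftrightarrow> u \<in> Dsp0_on p s E \<and>
     (\<forall>\<phi> \<in> Dsp0_on p s E.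
        (\<integral> z. Jp p (u (fst z) - u (snd z)) * (\<phi> (fst z) - \<phi> (snd z)) /
               norm (fst z - snd z) powr (real DIM('a) + s * p) \<partial>(lborel \<Otimes>\<^sub>M lborel))
        = \<mu> * (\<integral> x. \<bar>u x\<bar> powr (crit_exp DIM('a) p s - 2) * u x * \<phi> x \<partial>lborel))"

definition sobolev_const :: "'a::euclidean_space itself \<Rightarrow> real \<Rightarrow> real \<Rightarrow> real" where
  "sobolev_const _ p s = Inf {enn2real (gagliardo_p p s u) | u :: 'a \<Rightarrow> real.
      u \<in> Dsp0 p s \<and> (\<integral> x. \<bar>u x\<bar> powr crit_exp DIM('a) p s \<partial>lborel) powr (1 / crit_exp DIM('a) p s) = 1}"

definition I_infty :: "real \<Rightarrow> real \<Rightarrow> real \<Rightarrow> ('a::euclidean_space \<Rightarrow> real) \<Rightarrow> real" where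
  "I_infty p s \<mu> u = enn2real (gagliardo_p p s u) / p
     - \<mu> / crit_exp DIM('a) p s * (\<integral> x. \<bar>u x\<bar> powr crit_exp DIM('a) p s \<partial>lborel)"

end

theory Submission
  imports Defs
begin

text \<open>
  Testing the equation with \<open>u\<^sup>+\<close> and using the pointwise bound
  \<open>|a\<^sup>+ - b\<^sup>+|\<^sup>p \<le> J\<^sub>p(a - b) (a\<^sup>+ - b\<^sup>+)\<close> gives
  \<open>[u\<^sup>+]\<^sup>p \<le> \<mu> \<parallel>u\<^sup>+\<parallel>\<^sub>q\<^sup>q\<close> with \<open>q = p\<^sup>*\<^sub>s\<close>. The Sobolev inequality
  \<open>S \<parallel>u\<^sup>+\<parallel>\<^sub>q\<^sup>p \<le> [u\<^sup>+]\<^sup>p\<close> and \<open>u\<^sup>+ \<noteq> 0\<close> then force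
  \<open>\<parallel>u\<^sup>+\<parallel>\<^sub>q\<^sup>q \<ge> (S/\<mu>)\<^bsup>N/(sp)\<^esup>\<close>, because \<open>1 - p/q = sp/N\<close>.
  Since \<open>-u\<close> is again a solution, the same holds for \<open>u\<^sup>-\<close>, and the two add up to the
  bound on \<open>\<parallel>u\<parallel>\<^sub>q\<^sup>q\<close>. Testing with \<open>u\<close> itself gives \<open>[u]\<^sup>p = \<mu> \<parallel>u\<parallel>\<^sub>q\<^sup>q\<close>, and then
  \<open>I\<^sub>\<infinity>(u) = (1/p - 1/q) [u]\<^sup>p = (s/N) \<mu> \<parallel>u\<parallel>\<^sub>q\<^sup>q\<close>.
\<close>

abbreviation gagliardo_kernel :: "real \<Rightarrow> real \<Rightarrow> 'a::euclidean_space \<times> 'a \<Rightarrow> real" where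
  "gagliardo_kernel p s z \<equiv> norm (fst z - snd z) powr (real DIM('a) + s * p)"

lemma Jp_mult_self: "Jp p t * t = \<bar>t\<bar> powr p"
proof (cases "t = 0")
  case False
  have "\<bar>t\<bar> powr (p - 2 + 1 + 1) = \<bar>t\<bar> powr (p - 2) * \<bar>t\<bar> powr 1 * \<bar>t\<bar> powr 1"
    by (simp only: powr_add)
  then show ?thesis
    using False by (simp add: Jp_def abs_mult_self_eq mult.assoc)
qed (simp add: Jp_def)

lemma Jp_uminus: "Jp p (- t) = - Jp p t"
  by (simp add: Jp_def)

lemma Jp_mult_pos_part: "Jp p t * max t 0 = max t 0 powr p"
  by (cases "t > 0") (simp_all add: Jp_mult_self max_def)

lemma Jp_mult_bounds:
  assumes "1 \<le> p" "0 \<le> t * d" "\<bar>d\<bar> \<le> \<bar>t\<bar>"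
  shows "\<bar>d\<bar> powr p \<le> Jp p t * d" "Jp p t * d \<le> \<bar>t\<bar> powr p"
proof -
  have split_off: "\<bar>x\<bar> powr p = \<bar>x\<bar> powr (p - 1) * \<bar>x\<bar>" for x :: real
    using powr_add[of "\<bar>x\<bar>" "p - 1" 1] assms(1) by (cases "x = 0") auto
  have "Jp p t * d = \<bar>t\<bar> powr (p - 1) * \<bar>d\<bar>"
  proof (cases "t = 0")
    case False
    have "Jp p t * d = \<bar>t\<bar> powr (p - 2) * \<bar>t\<bar> * \<bar>d\<bar>"
      using assms(2) by (simp add: Jp_def abs_mult[symmetric] mult.assoc)
    also have "\<bar>t\<bar> powr (p - 2) * \<bar>t\<bar> = \<bar>t\<bar> powr (p - 1)"
      using False powr_add[of "\<bar>t\<bar>" "p - 2" 1] by simp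
    finally show ?thesis .
  qed (use assms(1) in \<open>simp add: Jp_def\<close>)
  moreover have "\<bar>d\<bar> powr (p - 1) \<le> \<bar>t\<bar> powr (p - 1)"
    using assms by (intro powr_mono2) auto
  ultimately show "\<bar>d\<bar> powr p \<le> Jp p t * d" "Jp p t * d \<le> \<bar>t\<bar> powr p"
    using assms(3) by (simp_all add: split_off mult_right_mono mult_left_mono)
qed

lemma Jp_mult_pos_part_diff_bounds:
  fixes a b :: real
  assumes "1 \<le> p"
  shows "\<bar>max a 0 - max b 0\<bar> powr p \<le> Jp p (a - b) * (max a 0 - max b 0)"
    and "\<bar>Jp p (a - b) * (max a 0 - max b 0)\<bar> \<le> \<bar>a - b\<bar> powr p"
proof -
  have "0 \<le> (a - b) * (max a 0 - max b 0)" "\<bar>max a 0 - max b 0\<bar> \<le> \<bar>a - b\<bar>"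
    by (auto simp: max_def mult_nonneg_nonneg mult_nonpos_nonpos mult_nonneg_nonpos mult_nonpos_nonneg)
  note bounds = Jp_mult_bounds[OF assms this]
  then show "\<bar>max a 0 - max b 0\<bar> powr p \<le> Jp p (a - b) * (max a 0 - max b 0)"
    by simp
  have "0 \<le> Jp p (a - b) * (max a 0 - max b 0)"
    using order_trans[OF powr_ge_zero bounds(1)] .
  with bounds(2) show "\<bar>Jp p (a - b) * (max a 0 - max b 0)\<bar> \<le> \<bar>a - b\<bar> powr p"
    by simp
qed

lemma pos_part_powr_add_neg_part_powr:
  fixes t :: real
  shows "max t 0 powr q + max (- t) 0 powr q = \<bar>t\<bar> powr q"
  by (auto simp: max_def)

lemma crit_exp_pos:
  assumes "0 < p" "0 < s" "s * p < real N"
  shows "0 < crit_exp N p s"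
proof -
  have "0 < s * p" using assms by simp
  then have "0 < real N" "0 < real N - s * p" using assms by linarith+
  then show ?thesis using assms unfolding crit_exp_def by (simp add: field_simps)
qed

lemma div_crit_exp:
  assumes "0 < p" "0 < s" "s * p < real N"
  shows "p / crit_exp N p s = 1 - s * p / real N"
proof -
  have "0 < s * p" using assms by simp
  then have "0 < real N" "0 < real N - s * p" using assms by linarith+
  then show ?thesis using assms unfolding crit_exp_def by (simp add: field_simps)
qed

lemma inverse_diff_inverse_crit_exp:
  assumes "0 < p" "0 < s" "s * p < real N"
  shows "1 / p - 1 / crit_exp N p s = s / real N"
proof -
  have "0 < s * p" using assms by simp
  then have "0 < real N" "0 < real N - s * p" using assms by linarith+
  then show ?thesis using assms unfolding crit_exp_def by (simp add: field_simps)
qed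

lemma powr_le_of_mult_powr_le:
  fixes S A \<mu> r :: real
  assumes "0 < A" "0 \<le> S" "0 < \<mu>" "0 < r" "S * A powr (1 - r) \<le> \<mu> * A"
  shows "(S / \<mu>) powr (1 / r) \<le> A"
proof -
  have "S / \<mu> \<le> A / A powr (1 - r)"
    using assms by (simp add: field_simps)
  also have "\<dots> = A powr r"
    using assms(1) by (simp add: powr_diff)
  finally have "(S / \<mu>) powr (1 / r) \<le> (A powr r) powr (1 / r)"
    using assms by (intro powr_mono2) auto
  also have "\<dots> = A"
    using assms by (simp add: powr_powr)
  finally show ?thesis .
qed

lemma integrable_gagliardo_integrand:
  assumes "w \<in> borel_measurable (lborel :: 'a::euclidean_space measure)" "gagliardo_p p s w < \<infinity>"
  shows "integrable (lborel \<Otimes>\<^sub>M lborel)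
           (\<lambda>z::'a \<times> 'a. \<bar>w (fst z) - w (snd z)\<bar> powr p / gagliardo_kernel p s z)"
  using assms unfolding gagliardo_p_def by (intro integrableI_nonneg) auto

lemma enn2real_gagliardo_p:
  assumes "w \<in> borel_measurable (lborel :: 'a::euclidean_space measure)" "gagliardo_p p s w < \<infinity>"
  shows "enn2real (gagliardo_p p s w) =
           (\<integral>z. \<bar>w (fst z) - w (snd z)\<bar> powr p / gagliardo_kernel p s z \<partial>(lborel \<Otimes>\<^sub>M lborel))"
  unfolding gagliardo_p_def
  by (subst nn_integral_eq_integral[OF integrable_gagliardo_integrand[OF assms]]) auto

lemma gagliardo_p_mono:
  assumes "0 \<le> p" "\<And>x y. \<bar>v x - v y\<bar> \<le> \<bar>w x - w y\<bar>"
  shows "gagliardo_p p s v \<le> gagliardo_p p s w"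
  unfolding gagliardo_p_def
  using assms by (intro nn_integral_mono ennreal_leI divide_right_mono powr_mono2) auto

lemma gagliardo_p_uminus: "gagliardo_p p s (\<lambda>x. - w x) = gagliardo_p p s w"
  unfolding gagliardo_p_def by (simp add: abs_minus_commute)

lemma gagliardo_p_cmult:
  assumes "w \<in> borel_measurable (lborel :: 'a::euclidean_space measure)"
  shows "gagliardo_p p s (\<lambda>x. c * w x) = ennreal (\<bar>c\<bar> powr p) * gagliardo_p p s w"
proof -
  have "ennreal (\<bar>c * w x - c * w y\<bar> powr p / d)
          = ennreal (\<bar>c\<bar> powr p) * ennreal (\<bar>w x - w y\<bar> powr p / d)" if "0 \<le> d" for x y d
    using that by (simp add: right_diff_distrib[symmetric] abs_mult powr_mult ennreal_mult[symmetric])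
  then show ?thesis
    unfolding gagliardo_p_def using assms by (simp add: nn_integral_cmult)
qed

lemma Dsp0_pos_part:
  assumes "0 \<le> p" "w \<in> Dsp0 p s"
  shows "(\<lambda>x. max (w x) 0) \<in> Dsp0 p s"
proof -
  have "(\<integral>\<^sup>+ x. ennreal (\<bar>max (w x) 0\<bar> powr crit_exp DIM('a) p s) \<partial>lborel)
          \<le> (\<integral>\<^sup>+ x. ennreal (\<bar>w x\<bar> powr crit_exp DIM('a) p s) \<partial>lborel)"
    by (intro nn_integral_mono ennreal_leI) (auto simp: max_def)
  moreover have "gagliardo_p p s (\<lambda>x. max (w x) 0) \<le> gagliardo_p p s w"
    using assms(1) by (rule gagliardo_p_mono) (auto simp: max_def)
  ultimately show ?thesis
    using assms(2) unfolding Dsp0_def by (auto simp: order.strict_trans1)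
qed

lemma Dsp0_uminus: "w \<in> Dsp0 p s \<Longrightarrow> (\<lambda>x. - w x) \<in> Dsp0 p s"
  unfolding Dsp0_def by (simp add: gagliardo_p_uminus)

lemma Dsp0_cmult:
  assumes "w \<in> Dsp0 p s"
  shows "(\<lambda>x. c * w x) \<in> Dsp0 p s"
proof -
  have [measurable]: "w \<in> borel_measurable lborel" using assms unfolding Dsp0_def by auto
  have "(\<integral>\<^sup>+ x. ennreal (\<bar>c * w x\<bar> powr q) \<partial>lborel)
          = ennreal (\<bar>c\<bar> powr q) * (\<integral>\<^sup>+ x. ennreal (\<bar>w x\<bar> powr q) \<partial>lborel)" for q
    by (simp add: abs_mult powr_mult ennreal_mult nn_integral_cmult)
  then show ?thesis
    using assms unfolding Dsp0_def
    by (simp add: gagliardo_p_cmult ennreal_mult_less_top)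
qed

lemma Dsp0_on_pos_part:
  "0 \<le> p \<Longrightarrow> w \<in> Dsp0_on p s E \<Longrightarrow> (\<lambda>x. max (w x) 0) \<in> Dsp0_on p s E"
  unfolding Dsp0_on_def by (auto simp: Dsp0_pos_part elim!: eventually_mono)

lemma Dsp0_on_uminus: "w \<in> Dsp0_on p s E \<Longrightarrow> (\<lambda>x. - w x) \<in> Dsp0_on p s E"
  unfolding Dsp0_on_def by (auto simp: Dsp0_uminus elim!: eventually_mono)

text \<open>The set whose infimum is \<open>S\<^sub>p\<^sub>,\<^sub>s\<close>; naming it lets us show it is nonempty, so that the
  infimum is not a junk value of \<open>Inf {}\<close>.\<close>
definition sobolev_quotients :: "'a::euclidean_space itself \<Rightarrow> real \<Rightarrow> real \<Rightarrow> real set" where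
  "sobolev_quotients _ p s = {enn2real (gagliardo_p p s u) | u :: 'a \<Rightarrow> real.
      u \<in> Dsp0 p s \<and> (\<integral> x. \<bar>u x\<bar> powr crit_exp DIM('a) p s \<partial>lborel) powr (1 / crit_exp DIM('a) p s) = 1}"

lemma sobolev_const_eq_Inf: "sobolev_const TYPE('a::euclidean_space) p s = Inf (sobolev_quotients TYPE('a) p s)"
  unfolding sobolev_const_def sobolev_quotients_def ..

lemma bdd_below_sobolev_quotients: "bdd_below (sobolev_quotients TYPE('a::euclidean_space) p s)"
  unfolding sobolev_quotients_def by (intro bdd_belowI[of _ 0]) auto

lemma normalized_mem_sobolev_quotients:
  fixes v :: "'a::euclidean_space \<Rightarrow> real" and p s :: real
  defines "q \<equiv> crit_exp DIM('a) p s"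
  defines "A \<equiv> \<integral>x. \<bar>v x\<bar> powr q \<partial>lborel"
  assumes "0 < q" "v \<in> Dsp0 p s" "0 < A"
  shows "enn2real (gagliardo_p p s v) / A powr (p / q) \<in> sobolev_quotients TYPE('a) p s"
proof -
  define c where "c = inverse (A powr (1 / q))"
  have c: "0 < c" "c powr q = inverse A" "c powr p = inverse (A powr (p / q))"
    using assms(3,5) by (simp_all add: c_def powr_powr inverse_powr)
  have [measurable]: "v \<in> borel_measurable lborel"
    using assms(4) unfolding Dsp0_def by auto
  have "(\<integral>x. \<bar>c * v x\<bar> powr q \<partial>lborel) = c powr q * A"
    unfolding A_def using c(1) by (simp add: abs_mult powr_mult)
  then have "(\<integral>x. \<bar>c * v x\<bar> powr q \<partial>lborel) = 1"
    using c(2) assms(5) by simp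
  moreover have "enn2real (gagliardo_p p s (\<lambda>x. c * v x)) = enn2real (gagliardo_p p s v) / A powr (p / q)"
    using c by (simp add: gagliardo_p_cmult enn2real_mult field_simps)
  ultimately show ?thesis
    unfolding sobolev_quotients_def q_def[symmetric]
    by (intro CollectI exI[of _ "\<lambda>x. c * v x"]) (simp add: Dsp0_cmult[OF assms(4)])
qed

lemma sobolev_inequality:
  fixes v :: "'a::euclidean_space \<Rightarrow> real" and p s :: real
  defines "q \<equiv> crit_exp DIM('a) p s"
  assumes "0 < q" "v \<in> Dsp0 p s"
  shows "sobolev_const TYPE('a) p s * (\<integral>x. \<bar>v x\<bar> powr q \<partial>lborel) powr (p / q)
           \<le> enn2real (gagliardo_p p s v)"
proof (cases "(\<integral>x. \<bar>v x\<bar> powr q \<partial>lborel) = 0")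
  case False
  then have A: "0 < (\<integral>x. \<bar>v x\<bar> powr q \<partial>lborel)"
    by (simp add: order_less_le)
  have "sobolev_const TYPE('a) p s
          \<le> enn2real (gagliardo_p p s v) / (\<integral>x. \<bar>v x\<bar> powr q \<partial>lborel) powr (p / q)"
    unfolding sobolev_const_eq_Inf q_def
    using normalized_mem_sobolev_quotients assms A bdd_below_sobolev_quotients
    by (intro cInf_lower) (simp_all add: q_def)
  then show ?thesis
    using A by (simp add: pos_le_divide_eq)
qed simp

lemma sobolev_const_nonneg:
  fixes v :: "'a::euclidean_space \<Rightarrow> real" and p s :: real
  assumes "0 < crit_exp DIM('a) p s" "v \<in> Dsp0 p s"
    and "0 < (\<integral>x. \<bar>v x\<bar> powr crit_exp DIM('a) p s \<partial>lborel)"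
  shows "0 \<le> sobolev_const TYPE('a) p s"
  unfolding sobolev_const_eq_Inf
  using normalized_mem_sobolev_quotients[OF assms]
  by (intro cInf_greatest) (auto simp: sobolev_quotients_def)

lemma gagliardo_p_pos_part_le:
  fixes u :: "'a::euclidean_space \<Rightarrow> real"
  assumes "1 \<le> p" "u \<in> Dsp0 p s"
  shows "enn2real (gagliardo_p p s (\<lambda>x. max (u x) 0))
           \<le> (\<integral>z. Jp p (u (fst z) - u (snd z)) * (max (u (fst z)) 0 - max (u (snd z)) 0)
                  / gagliardo_kernel p s z \<partial>(lborel \<Otimes>\<^sub>M lborel))"
proof -
  have um [measurable]: "u \<in> borel_measurable lborel" and ug: "gagliardo_p p s u < \<infinity>"
    using assms(2) unfolding Dsp0_def by auto
  have "(\<lambda>x. max (u x) 0) \<in> Dsp0 p s"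
    using assms by (simp add: Dsp0_pos_part)
  then have "gagliardo_p p s (\<lambda>x. max (u x) 0) < \<infinity>"
    unfolding Dsp0_def by auto
  then have "enn2real (gagliardo_p p s (\<lambda>x. max (u x) 0))
      = (\<integral>z. \<bar>max (u (fst z)) 0 - max (u (snd z)) 0\<bar> powr p / gagliardo_kernel p s z
           \<partial>(lborel \<Otimes>\<^sub>M lborel))"
    by (intro enn2real_gagliardo_p) auto
  also have "\<dots> \<le> (\<integral>z. Jp p (u (fst z) - u (snd z)) * (max (u (fst z)) 0 - max (u (snd z)) 0)
                  / gagliardo_kernel p s z \<partial>(lborel \<Otimes>\<^sub>M lborel))"
  proof (rule integral_mono)
    show "integrable (lborel \<Otimes>\<^sub>M lborel) (\<lambda>z::'a \<times> 'a.
        Jp p (u (fst z) - u (snd z)) * (max (u (fst z)) 0 - max (u (snd z)) 0) / gagliardo_kernel p s z)"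
    proof (rule Bochner_Integration.integrable_bound[OF integrable_gagliardo_integrand[OF um ug]])
      show "AE z in lborel \<Otimes>\<^sub>M lborel. norm (Jp p (u (fst z) - u (snd z))
                * (max (u (fst z)) 0 - max (u (snd z)) 0) / gagliardo_kernel p s z)
              \<le> norm (\<bar>u (fst z) - u (snd z)\<bar> powr p / gagliardo_kernel p s z)"
        using Jp_mult_pos_part_diff_bounds(2)[OF assms(1)]
        by (auto intro!: divide_right_mono)
    qed (unfold Jp_def, measurable)
  qed (use Jp_mult_pos_part_diff_bounds(1)[OF assms(1)] in
      \<open>auto intro!: divide_right_mono integrable_gagliardo_integrand \<open>gagliardo_p p s (\<lambda>x. max (u x) 0) < \<infinity>\<close>\<close>)
  finally show ?thesis .
qed

lemma weak_solution_uminus: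
  assumes "weak_solution p s \<mu> E u"
  shows "weak_solution p s \<mu> E (\<lambda>x. - u x)"
  unfolding weak_solution_def
proof (intro conjI ballI)
  show "(\<lambda>x. - u x) \<in> Dsp0_on p s E"
    using assms unfolding weak_solution_def by (simp add: Dsp0_on_uminus)
next
  fix \<phi> assume "\<phi> \<in> Dsp0_on p s E"
  with assms have "(\<integral>z. Jp p (u (fst z) - u (snd z)) * (\<phi> (fst z) - \<phi> (snd z))
                      / gagliardo_kernel p s z \<partial>(lborel \<Otimes>\<^sub>M lborel))
        = \<mu> * (\<integral>x. \<bar>u x\<bar> powr (crit_exp DIM('a) p s - 2) * u x * \<phi> x \<partial>lborel)"
    unfolding weak_solution_def by blast
  then show "(\<integral>z. Jp p (- u (fst z) - - u (snd z)) * (\<phi> (fst z) - \<phi> (snd z))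
                      / gagliardo_kernel p s z \<partial>(lborel \<Otimes>\<^sub>M lborel))
        = \<mu> * (\<integral>x. \<bar>- u x\<bar> powr (crit_exp DIM('a) p s - 2) * - u x * \<phi> x \<partial>lborel)"
    by (simp only: minus_diff_minus Jp_uminus mult_minus_left mult_minus_right minus_divide_left[symmetric]
        abs_minus_cancel Bochner_Integration.integral_minus)
qed

lemma weak_solution_energy:
  fixes u :: "'a::euclidean_space \<Rightarrow> real"
  assumes "weak_solution p s \<mu> E u"
  shows "enn2real (gagliardo_p p s u) = \<mu> * (\<integral>x. \<bar>u x\<bar> powr crit_exp DIM('a) p s \<partial>lborel)"
proof -
  have uD: "u \<in> Dsp0_on p s E" and
    tested: "(\<integral>z. Jp p (u (fst z) - u (snd z)) * (u (fst z) - u (snd z))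
                 / gagliardo_kernel p s z \<partial>(lborel \<Otimes>\<^sub>M lborel))
      = \<mu> * (\<integral>x. \<bar>u x\<bar> powr (crit_exp DIM('a) p s - 2) * u x * u x \<partial>lborel)"
    using assms unfolding weak_solution_def by blast+
  have "(\<integral>z. \<bar>u (fst z) - u (snd z)\<bar> powr p / gagliardo_kernel p s z \<partial>(lborel \<Otimes>\<^sub>M lborel))
      = (\<integral>z. Jp p (u (fst z) - u (snd z)) * (u (fst z) - u (snd z))
                 / gagliardo_kernel p s z \<partial>(lborel \<Otimes>\<^sub>M lborel))"
    by (simp only: Jp_mult_self)
  also note tested
  also have "(\<integral>x. \<bar>u x\<bar> powr (crit_exp DIM('a) p s - 2) * u x * u x \<partial>lborel)
      = (\<integral>x. \<bar>u x\<bar> powr crit_exp DIM('a) p s \<partial>lborel)"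
    using Jp_mult_self[of "crit_exp DIM('a) p s"] by (simp only: Jp_def)
  finally have "(\<integral>z. \<bar>u (fst z) - u (snd z)\<bar> powr p / gagliardo_kernel p s z \<partial>(lborel \<Otimes>\<^sub>M lborel))
      = \<mu> * (\<integral>x. \<bar>u x\<bar> powr crit_exp DIM('a) p s \<partial>lborel)" .
  with uD show ?thesis
    unfolding Dsp0_on_def Dsp0_def by (simp add: enn2real_gagliardo_p)
qed

lemma integrable_abs_powr_Dsp0:
  fixes v :: "'a::euclidean_space \<Rightarrow> real"
  shows "v \<in> Dsp0 p s \<Longrightarrow> integrable lborel (\<lambda>x. \<bar>v x\<bar> powr crit_exp DIM('a) p s)"
  unfolding Dsp0_def by (intro integrableI_nonneg) auto

lemma integral_abs_powr_pos_iff_Dsp0: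
  fixes v :: "'a::euclidean_space \<Rightarrow> real"
  assumes "v \<in> Dsp0 p s"
  shows "0 < (\<integral>x. \<bar>v x\<bar> powr crit_exp DIM('a) p s \<partial>lborel) \<longleftrightarrow> \<not> (AE x in lborel. v x = 0)"
  using integral_nonneg_eq_0_iff_AE[OF integrable_abs_powr_Dsp0[OF assms]]
  by (simp add: order_less_le)

lemma integral_abs_powr_split:
  fixes v :: "'a \<Rightarrow> real"
  assumes [measurable]: "v \<in> borel_measurable M" and "integrable M (\<lambda>x. \<bar>v x\<bar> powr q)"
  shows "(\<integral>x. \<bar>v x\<bar> powr q \<partial>M) = (\<integral>x. max (v x) 0 powr q \<partial>M) + (\<integral>x. max (- v x) 0 powr q \<partial>M)"
proof -
  have "integrable M (\<lambda>x. max (v x) 0 powr q)" "integrable M (\<lambda>x. max (- v x) 0 powr q)"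
    by (auto intro!: Bochner_Integration.integrable_bound[OF assms(2)] simp: max_def)
  then show ?thesis
    by (simp add: pos_part_powr_add_neg_part_powr flip: Bochner_Integration.integral_add)
qed

lemma weak_solution_pos_part_bound:
  fixes u :: "'a::euclidean_space \<Rightarrow> real" and p s \<mu> :: real
  defines "q \<equiv> crit_exp DIM('a) p s"
  assumes "1 < p" "0 < s" "s * p < real DIM('a)" "0 < \<mu>"
    and sol: "weak_solution p s \<mu> E u"
    and nonzero: "\<not> (AE x in lborel. max (u x) 0 = 0)"
  shows "(sobolev_const TYPE('a) p s / \<mu>) powr (real DIM('a) / (s * p))
           \<le> (\<integral>x. max (u x) 0 powr q \<partial>lborel)"
proof -
  define A where "A = (\<integral>x. max (u x) 0 powr q \<partial>lborel)"
  have q: "0 < q"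
    unfolding q_def using assms by (intro crit_exp_pos) auto
  have "u \<in> Dsp0_on p s E"
    using sol unfolding weak_solution_def by blast
  then have uD: "u \<in> Dsp0 p s" and upD: "(\<lambda>x. max (u x) 0) \<in> Dsp0_on p s E"
    using Dsp0_on_pos_part[of p] assms(2) by (simp_all add: Dsp0_on_def)
  then have upD': "(\<lambda>x. max (u x) 0) \<in> Dsp0 p s"
    unfolding Dsp0_on_def by blast
  have "(\<integral>z. Jp p (u (fst z) - u (snd z)) * (max (u (fst z)) 0 - max (u (snd z)) 0)
        / gagliardo_kernel p s z \<partial>(lborel \<Otimes>\<^sub>M lborel))
      = \<mu> * (\<integral>x. \<bar>u x\<bar> powr (q - 2) * u x * max (u x) 0 \<partial>lborel)"
    using bspec[OF conjunct2[OF sol[unfolded weak_solution_def]] upD] by (simp add: q_def)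
  also have "\<dots> = \<mu> * A"
    using Jp_mult_pos_part[of q] by (simp only: Jp_def A_def)
  finally have energy: "enn2real (gagliardo_p p s (\<lambda>x. max (u x) 0)) \<le> \<mu> * A"
    using gagliardo_p_pos_part_le[OF _ uD] assms(2) by simp
  have A_pos: "0 < A"
    using integral_abs_powr_pos_iff_Dsp0[OF upD'] nonzero by (simp add: A_def q_def)
  have "0 \<le> sobolev_const TYPE('a) p s"
    using sobolev_const_nonneg[OF q[unfolded q_def] upD'] A_pos by (simp add: A_def q_def)
  moreover have "sobolev_const TYPE('a) p s * A powr (1 - s * p / real DIM('a)) \<le> \<mu> * A"
    using sobolev_inequality[OF q[unfolded q_def] upD'] energy div_crit_exp[of p s] assms(2-4)
    by (simp add: A_def q_def)
  ultimately show ?thesis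
    using powr_le_of_mult_powr_le[of A _ \<mu> "s * p / real DIM('a)"] A_pos assms(2-5)
    by (simp add: A_def)
qed

theorem lemma2p10:
  fixes u :: "'a::euclidean_space \<Rightarrow> real" and E :: "'a set" and p s \<mu> :: real
  assumes "1 < p" and "0 < s" and "s < 1" and "s * p < real DIM('a)" and "0 < \<mu>"
    and "open E" and "connected E" and "E \<noteq> {}"
    and "u \<in> Dsp0_on p s E"
    and "weak_solution p s \<mu> E u"
    and "\<not> (AE x in lborel. max (u x) 0 = 0)"
    and "\<not> (AE x in lborel. max (- u x) 0 = 0)"
  shows "(\<integral>x\<in>E. \<bar>u x\<bar> powr crit_exp DIM('a) p s \<partial>lborel)
           \<ge> 2 * (sobolev_const TYPE('a) p s / \<mu>) powr (real DIM('a) / (s * p))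
    \<and> enn2real (gagliardo_p p s u)
           \<ge> 2 * \<mu> * (sobolev_const TYPE('a) p s / \<mu>) powr (real DIM('a) / (s * p))
    \<and> I_infty p s \<mu> u
           \<ge> 2 * \<mu> * (s / real DIM('a)) * (sobolev_const TYPE('a) p s / \<mu>) powr (real DIM('a) / (s * p))"
proof -
  define q where "q = crit_exp DIM('a) p s"
  define X where "X = (sobolev_const TYPE('a) p s / \<mu>) powr (real DIM('a) / (s * p))"
  define T where "T = (\<integral>x. \<bar>u x\<bar> powr q \<partial>lborel)"
  have uD: "u \<in> Dsp0 p s" and [measurable]: "u \<in> borel_measurable lborel"
    and u_outside: "AE x in lborel. x \<notin> E \<longrightarrow> u x = 0"
    using assms(9) unfolding Dsp0_on_def Dsp0_def by auto
  have [measurable]: "E \<in> sets lborel"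
    using \<open>open E\<close> by simp
  have two_X: "2 * X \<le> T"
    using weak_solution_pos_part_bound[OF assms(1,2,4,5,10,11)]
      weak_solution_pos_part_bound[OF assms(1,2,4,5) weak_solution_uminus[OF assms(10)] assms(12)]
      integral_abs_powr_split[of u lborel q] integrable_abs_powr_Dsp0[OF uD]
    by (simp add: X_def T_def q_def)
  moreover have "(\<integral>x\<in>E. \<bar>u x\<bar> powr q \<partial>lborel) = T"
    unfolding set_lebesgue_integral_def T_def
    by (rule integral_cong_AE) (use u_outside in \<open>auto simp: indicator_def elim!: eventually_mono\<close>)
  moreover have energy: "enn2real (gagliardo_p p s u) = \<mu> * T"
    using weak_solution_energy[OF assms(10)] by (simp add: T_def q_def)
  moreover have "I_infty p s \<mu> u = \<mu> * T * (1 / p - 1 / q)"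
    unfolding I_infty_def energy T_def q_def by (simp add: algebra_simps)
  then have "I_infty p s \<mu> u = \<mu> * (s / real DIM('a)) * T"
    using inverse_diff_inverse_crit_exp[of p s] assms(1,2,4) by (simp add: q_def)
  moreover have "\<mu> * (2 * X) \<le> \<mu> * T" "\<mu> * (s / real DIM('a)) * (2 * X) \<le> \<mu> * (s / real DIM('a)) * T"
    using two_X assms(2,5) by (intro mult_left_mono; simp)+
  ultimately show ?thesis
    by (simp add: X_def q_def algebra_simps)
qed

end
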